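(* Let $N\ge1$ and let $\mathcal{A}=\prod_{n=1}^N\mathcal{A}_n$ be a finite set of reservation vectors. Let $C(a,b)=C_R(a)+C_V(a,b)+C_T(a,b)$ be the total cost of reservation $a\in\mathcal{A}$ under job request vector $b$, and assume there is $\Theta>0$ such that $|C_R(a)|\le\Theta$, $|C_T(a,b)|\le\Theta$ and $|C_V(a,b)|\le\Theta$ for all reservations $a\in\mathcal{A}$ and all job request vectors $b$. Fix a horizon $T>0$, take $\eta=\sqrt{\log|\mathcal{A}|/T}$, and let $b^1,\dots,b^T$ be any sequence of job request vectors. Run the exponentially weighted strategy: at each $t=1,\dots,T$ the reservation $A^t$ is drawn at random (independently given the past draws) from the distribution $P^t$ on $\mathcal{A}$ given by $$w^t(a)=\exp\Big\{-\eta\sum_{s=1}^{t-1}C(a,b^s)\Big\},\qquad P^t_a=\frac{w^t(a)}{\sum_{a'\in\mathcal{A}}w^t(a')}.$$ Define the regret $R_T=\sum_{t=1}^TC(A^t,b^t)-\min_{a\in\mathcal{A}}\sum_{t=1}^TC(a,b^t)$. Then for any $0<\delta<1$, with probability at least $1-\delta$, $$R_T\le\Big(\frac{9\Theta^2}{8}+1\Big)\sqrt{T\log|\mathcal{A}|}+3\Theta\sqrt{\tfrac12\log(\delta^{-1})\,T}.$$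
   Context: Setting: a network of $N$ servers; at each time slot $t$ an administrator chooses a reservation vector $a=(a_1,\dots,a_N)\in\mathcal{A}$ (with $\mathcal{A}_n$ the finite set of possible reservation levels at server $n$) before observing the job requests $b=(b_1,\dots,b_N)$; jobs may then be transferred between servers. With positive functions $f^R_n,f^V_n,f^T_{n,m}$, the costs are $C_R(a)=\sum_{n}f^R_n(a_n)$, $C_V(a,b)=\sum_n f^V_n\big(b_n-a_n-\sum_{m}\delta_{n,m}\big)$, $C_T(a,b)=\sum_n\sum_{m\ne n}f^T_{n,m}(\delta_{n,m})$, where the transfer amounts $\delta_{n,m}=\delta_{n,m}(a,b)$ are an optimal solution of $\min\sum_n\big(\sum_{m\ne n}f^T_{n,m}(\delta_{n,m})+f^V_n(b_n-a_n-\sum_{m\ne n}\delta_{n,m})\big)$ subject to $\delta_{n,m}\le\min\{(b_n-a_n)^+,(a_m-b_m)^+\}$ for all $n\ne m$. The probability is over the random draws $A^1,\dots,A^T$. *)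

theory Defs
  imports "HOL-Analysis.Analysis"
begin

text \<open>Servers are indexed by 0..<N. Reservation and request vectors are functions nat => real
(only their values on 0..<N matter). A transfer plan is d :: nat => nat => real, d n m being the
amount moved from server n to server m.\<close>

type_synonym vec = "nat \<Rightarrow> real"
type_synonym transfer = "nat \<Rightarrow> nat \<Rightarrow> real"

definition res_set :: "nat \<Rightarrow> (nat \<Rightarrow> real set) \<Rightarrow> vec set" where
  "res_set N Alev = PiE {..<N} Alev"

definition cost_R :: "nat \<Rightarrow> (nat \<Rightarrow> real \<Rightarrow> real) \<Rightarrow> vec \<Rightarrow> real" where
  "cost_R N fR a = (\<Sum>n<N. fR n (a n))"

definition cost_V_of :: "nat \<Rightarrow> (nat \<Rightarrow> real \<Rightarrow> real) \<Rightarrow> vec \<Rightarrow> vec \<Rightarrow> transfer \<Rightarrow> real" where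
  "cost_V_of N fV a b d = (\<Sum>n<N. fV n (b n - a n - (\<Sum>m\<in>{..<N} - {n}. d n m)))"

definition cost_T_of :: "nat \<Rightarrow> (nat \<Rightarrow> nat \<Rightarrow> real \<Rightarrow> real) \<Rightarrow> transfer \<Rightarrow> real" where
  "cost_T_of N fT d = (\<Sum>n<N. \<Sum>m\<in>{..<N} - {n}. fT n m (d n m))"

definition feasible_transfer :: "nat \<Rightarrow> vec \<Rightarrow> vec \<Rightarrow> transfer \<Rightarrow> bool" where
  "feasible_transfer N a b d \<longleftrightarrow>
     (\<forall>n<N. \<forall>m<N. n \<noteq> m \<longrightarrow> d n m \<le> min (max (b n - a n) 0) (max (a m - b m) 0))"

definition optimal_transfer ::
  "nat \<Rightarrow> (nat \<Rightarrow> real \<Rightarrow> real) \<Rightarrow> (nat \<Rightarrow> nat \<Rightarrow> real \<Rightarrow> real) \<Rightarrow> vec set \<Rightarrow> vec set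
     \<Rightarrow> (vec \<Rightarrow> vec \<Rightarrow> transfer) \<Rightarrow> bool" where
  "optimal_transfer N fV fT AA B tr \<longleftrightarrow>
     (\<forall>a\<in>AA. \<forall>b\<in>B. feasible_transfer N a b (tr a b) \<and>
        (\<forall>d. feasible_transfer N a b d \<longrightarrow>
           cost_T_of N fT (tr a b) + cost_V_of N fV a b (tr a b)
             \<le> cost_T_of N fT d + cost_V_of N fV a b d))"

definition cost_V :: "nat \<Rightarrow> (nat \<Rightarrow> real \<Rightarrow> real) \<Rightarrow> (vec \<Rightarrow> vec \<Rightarrow> transfer) \<Rightarrow> vec \<Rightarrow> vec \<Rightarrow> real" where
  "cost_V N fV tr a b = cost_V_of N fV a b (tr a b)"

definition cost_T :: "nat \<Rightarrow> (nat \<Rightarrow> nat \<Rightarrow> real \<Rightarrow> real) \<Rightarrow> (vec \<Rightarrow> vec \<Rightarrow> transfer) \<Rightarrow> vec \<Rightarrow> vec \<Rightarrow> real" where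
  "cost_T N fT tr a b = cost_T_of N fT (tr a b)"

definition ew_weight :: "real \<Rightarrow> (vec \<Rightarrow> vec \<Rightarrow> real) \<Rightarrow> (nat \<Rightarrow> vec) \<Rightarrow> nat \<Rightarrow> vec \<Rightarrow> real" where
  "ew_weight eta C bs t a = exp (- eta * (\<Sum>s\<in>{1..<t}. C a (bs s)))"

definition ew_prob :: "vec set \<Rightarrow> real \<Rightarrow> (vec \<Rightarrow> vec \<Rightarrow> real) \<Rightarrow> (nat \<Rightarrow> vec) \<Rightarrow> nat \<Rightarrow> vec \<Rightarrow> real" where
  "ew_prob AA eta C bs t a = ew_weight eta C bs t a / (\<Sum>a'\<in>AA. ew_weight eta C bs t a')"

text \<open>Probability, under the law of the draws A^1..A^T (A^t ~ P^t, each drawn independently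
given the past; since P^t does not depend on past draws this is the product law), of an event
E on draw sequences omega in PiE {1..T} (\<lambda>_. AA).\<close>
definition ew_event_prob ::
  "vec set \<Rightarrow> real \<Rightarrow> (vec \<Rightarrow> vec \<Rightarrow> real) \<Rightarrow> (nat \<Rightarrow> vec) \<Rightarrow> nat \<Rightarrow> ((nat \<Rightarrow> vec) \<Rightarrow> bool) \<Rightarrow> real" where
  "ew_event_prob AA eta C bs T E =
     (\<Sum>\<omega>\<in>{\<omega>\<in>PiE {1..T} (\<lambda>_. AA). E \<omega>}. \<Prod>t\<in>{1..T}. ew_prob AA eta C bs t (\<omega> t))"

definition regret :: "vec set \<Rightarrow> (vec \<Rightarrow> vec \<Rightarrow> real) \<Rightarrow> (nat \<Rightarrow> vec) \<Rightarrow> nat \<Rightarrow> (nat \<Rightarrow> vec) \<Rightarrow> real" where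
  "regret AA C bs T \<omega> =
     (\<Sum>t\<in>{1..T}. C (\<omega> t) (bs t)) - Min ((\<lambda>a. \<Sum>t\<in>{1..T}. C a (bs t)) ` AA)"

end

theory Submission
  imports Defs "HOL-Probability.Probability"
begin

text \<open>
  The total cost takes values in [0, 3\<Theta>]. In round t the logarithm of the total weight
  W_t = \<Sum>_a w^t(a) decreases by at least \<eta> times the expected cost under P^t, up to an
  error \<eta>^2 (3\<Theta>)^2 / 8 (Hoeffding's lemma), while W_(T+1) is at least the weight
  exp (-\<eta> min_a L(a)) of the best fixed reservation. Comparing the two bounds gives an
  expected regret of at most ln |A| / \<eta> + \<eta> T (3\<Theta>)^2 / 8, which for the given \<eta> is
  (9\<Theta>^2/8 + 1) sqrt (T ln |A|). The draws A^t are independent, so by Hoeffding's inequality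
  the realised cost exceeds its expectation by more than 3\<Theta> sqrt (ln (1/\<delta>) T / 2) with
  probability at most \<delta>.
\<close>

lemma (in prob_space) Hoeffdings_lemma_expectation:
  fixes f :: "'a \<Rightarrow> real"
  assumes [measurable]: "random_variable borel f"
    and bounded: "AE x in M. f x \<in> {a..b}" and "l > 0"
  shows "expectation (\<lambda>x. exp (l * f x)) \<le> exp (l * expectation f + l\<^sup>2 * (b - a)\<^sup>2 / 8)"
proof -
  interpret interval_bounded_random_variable M f a b
    by unfold_locales (fact assms)+
  define \<mu> where "\<mu> = expectation f"
  have "integrable M (\<lambda>x. exp (l * (f x - \<mu>)))"
  proof (rule integrable_const_bound)
    show "AE x in M. norm (exp (l * (f x - \<mu>))) \<le> exp (l * (b - \<mu>))"
      using bounded by eventually_elim (use \<open>l > 0\<close> in auto)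
  qed simp
  then have "ennreal (expectation (\<lambda>x. exp (l * (f x - \<mu>))))
      = (\<integral>\<^sup>+ x. ennreal (exp (l * (f x - \<mu>))) \<partial>M)"
    by (intro nn_integral_eq_integral[symmetric]) auto
  also have "\<dots> \<le> ennreal (exp (l\<^sup>2 * (b - a)\<^sup>2 / 8))"
    unfolding \<mu>_def by (rule Hoeffdings_lemma_nn_integral) fact
  finally have centered: "expectation (\<lambda>x. exp (l * (f x - \<mu>))) \<le> exp (l\<^sup>2 * (b - a)\<^sup>2 / 8)"
    by simp
  have "expectation (\<lambda>x. exp (l * f x)) = expectation (\<lambda>x. exp (l * \<mu>) * exp (l * (f x - \<mu>)))"
    by (simp add: exp_add[symmetric] algebra_simps)
  also have "\<dots> = exp (l * \<mu>) * expectation (\<lambda>x. exp (l * (f x - \<mu>)))"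
    by (rule integral_mult_right_zero)
  also have "\<dots> \<le> exp (l * \<mu>) * exp (l\<^sup>2 * (b - a)\<^sup>2 / 8)"
    using centered by simp
  finally show ?thesis
    by (simp add: \<mu>_def exp_add)
qed

lemma expectation_Pi_pmf_component:
  fixes f :: "'a \<Rightarrow> real"
  assumes "finite I" "i \<in> I"
  shows "measure_pmf.expectation (Pi_pmf I d p) (\<lambda>\<omega>. f (\<omega> i)) = measure_pmf.expectation (p i) f"
proof -
  have "measure_pmf.expectation (Pi_pmf I d p) (\<lambda>\<omega>. f (\<omega> i))
      = measure_pmf.expectation (map_pmf (\<lambda>\<omega>. \<omega> i) (Pi_pmf I d p)) f"
    by simp
  also have "map_pmf (\<lambda>\<omega>. \<omega> i) (Pi_pmf I d p) = p i"
    using assms by (simp add: Pi_pmf_component)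
  finally show ?thesis .
qed

lemma Pi_pmf_Hoeffding_confidence:
  fixes p :: "'i \<Rightarrow> 'a pmf" and f :: "'i \<Rightarrow> 'a \<Rightarrow> real"
  assumes "finite I" "I \<noteq> {}"
    and bounded: "\<And>i x. i \<in> I \<Longrightarrow> x \<in> set_pmf (p i) \<Longrightarrow> f i x \<in> {a..b}"
    and "a < b" "0 < \<delta>" "\<delta> \<le> 1"
  shows "measure_pmf.prob (Pi_pmf I d p)
           {\<omega>. (\<Sum>i\<in>I. f i (\<omega> i)) \<le> (\<Sum>i\<in>I. measure_pmf.expectation (p i) (f i))
                                     + (b - a) * sqrt (1/2 * ln (1/\<delta>) * card I)}
         \<ge> 1 - \<delta>"
proof -
  define \<Omega> where "\<Omega> = Pi_pmf I d p"
  define X where "X = (\<lambda>i (\<omega> :: 'i \<Rightarrow> 'a). f i (\<omega> i))"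
  define \<epsilon> where "\<epsilon> = (b - a) * sqrt (1/2 * ln (1/\<delta>) * card I)"
  interpret Hoeffding_ineq "measure_pmf \<Omega>" I X "\<lambda>_. a" "\<lambda>_. b"
    "\<Sum>i\<in>I. measure_pmf.expectation \<Omega> (X i)"
  proof unfold_locales
    show "prob_space.indep_vars (measure_pmf \<Omega>) (\<lambda>_. borel) X I"
      unfolding \<Omega>_def X_def
      by (intro prob_space.indep_vars_compose2[OF _ indep_vars_Pi_pmf, where Y = f])
         (auto simp: measure_pmf.prob_space_axioms \<open>finite I\<close>)
    show "AE \<omega> in measure_pmf \<Omega>. X i \<omega> \<in> {a..b}" if "i \<in> I" for i
      using bounded that \<open>finite I\<close>
      by (auto simp: \<Omega>_def X_def AE_measure_pmf_iff set_Pi_pmf PiE_dflt_def)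
  qed (fact \<open>finite I\<close>)
  have "\<epsilon>\<^sup>2 = (b - a)\<^sup>2 * (1/2 * ln (1/\<delta>) * card I)"
    using \<open>0 < \<delta>\<close> \<open>\<delta> \<le> 1\<close> by (simp add: \<epsilon>_def power_mult_distrib)
  then have "-2 * \<epsilon>\<^sup>2 / (\<Sum>i\<in>I. (b - a)\<^sup>2) = ln \<delta>"
    using assms(1,2,4,5) by (simp add: ln_div field_simps)
  moreover have "\<epsilon> \<ge> 0"
    using \<open>a < b\<close> \<open>0 < \<delta>\<close> \<open>\<delta> \<le> 1\<close> by (simp add: \<epsilon>_def)
  ultimately have "measure_pmf.prob \<Omega>
      {\<omega>. (\<Sum>i\<in>I. X i \<omega>) \<ge> (\<Sum>i\<in>I. measure_pmf.expectation \<Omega> (X i)) + \<epsilon>} \<le> \<delta>"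
    using Hoeffding_ineq_ge[of \<epsilon>] assms(1,2,4,5) by (simp add: card_gt_0_iff)
  then have "1 - \<delta> \<le> measure_pmf.prob \<Omega>
      (- {\<omega>. (\<Sum>i\<in>I. X i \<omega>) \<ge> (\<Sum>i\<in>I. measure_pmf.expectation \<Omega> (X i)) + \<epsilon>})"
    using measure_pmf.prob_compl[of _ \<Omega>] by (simp add: Compl_eq_Diff_UNIV[symmetric])
  also have "\<dots> \<le> measure_pmf.prob \<Omega>
      {\<omega>. (\<Sum>i\<in>I. X i \<omega>) \<le> (\<Sum>i\<in>I. measure_pmf.expectation (p i) (f i)) + \<epsilon>}"
    using \<open>finite I\<close> unfolding \<Omega>_def X_def
    by (intro measure_pmf.finite_measure_mono) (auto simp: expectation_Pi_pmf_component)
  finally show ?thesis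
    by (simp add: \<Omega>_def X_def \<epsilon>_def)
qed

text \<open>The law P^t of the round-t draw; it has P^t_a as weights only when A is finite and nonempty.\<close>

definition ew_pmf ::
  "vec set \<Rightarrow> real \<Rightarrow> (vec \<Rightarrow> vec \<Rightarrow> real) \<Rightarrow> (nat \<Rightarrow> vec) \<Rightarrow> nat \<Rightarrow> vec pmf" where
  "ew_pmf A \<eta> C bs t = embed_pmf (\<lambda>a. if a \<in> A then ew_prob A \<eta> C bs t a else 0)"

lemma ew_weight_pos: "ew_weight \<eta> C bs t a > 0"
  by (simp add: ew_weight_def)

lemma sum_ew_weight_pos:
  "finite A \<Longrightarrow> A \<noteq> {} \<Longrightarrow> (\<Sum>a\<in>A. ew_weight \<eta> C bs t a) > 0"
  by (intro sum_pos) (auto intro: ew_weight_pos)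

lemma ew_weight_Suc:
  "1 \<le> t \<Longrightarrow> ew_weight \<eta> C bs (Suc t) a = ew_weight \<eta> C bs t a * exp (- \<eta> * C a (bs t))"
  by (simp add: ew_weight_def atLeastLessThanSuc exp_add[symmetric] algebra_simps)

lemma ew_prob_nonneg: "ew_prob A \<eta> C bs t a \<ge> 0"
  unfolding ew_prob_def by (intro divide_nonneg_nonneg sum_nonneg less_imp_le ew_weight_pos)

lemma sum_ew_prob:
  "finite A \<Longrightarrow> A \<noteq> {} \<Longrightarrow> (\<Sum>a\<in>A. ew_prob A \<eta> C bs t a) = 1"
  using sum_ew_weight_pos[of A \<eta> C bs t] by (simp add: ew_prob_def sum_divide_distrib[symmetric])

context
  fixes A :: "vec set"
  assumes finite: "finite A" and nonempty: "A \<noteq> {}"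
begin

lemma pmf_ew_pmf: "pmf (ew_pmf A \<eta> C bs t) a = (if a \<in> A then ew_prob A \<eta> C bs t a else 0)"
proof -
  have "(\<integral>\<^sup>+a. ennreal (if a \<in> A then ew_prob A \<eta> C bs t a else 0) \<partial>count_space UNIV)
        = ennreal (\<Sum>a\<in>A. ew_prob A \<eta> C bs t a)"
    using finite by (subst nn_integral_count_space') (auto simp: ew_prob_nonneg sum_ennreal)
  then show ?thesis
    unfolding ew_pmf_def
    by (intro pmf_embed_pmf) (auto simp: ew_prob_nonneg sum_ew_prob finite nonempty)
qed

lemma set_pmf_ew_pmf: "set_pmf (ew_pmf A \<eta> C bs t) \<subseteq> A"
  by (auto simp: set_pmf_eq pmf_ew_pmf)

lemma expectation_ew_pmf:
  "measure_pmf.expectation (ew_pmf A \<eta> C bs t) f = (\<Sum>a\<in>A. ew_prob A \<eta> C bs t a * f a)"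
  by (subst integral_measure_pmf[OF finite])
     (auto simp: pmf_ew_pmf dest: set_pmf_ew_pmf[THEN subsetD])

lemma ew_event_prob_eq_Pi_pmf:
  "ew_event_prob A \<eta> C bs T E
     = measure_pmf.prob (Pi_pmf {1..T} undefined (ew_pmf A \<eta> C bs)) {\<omega>. E \<omega>}"
proof -
  define \<Omega> where "\<Omega> = Pi_pmf {1..T} undefined (ew_pmf A \<eta> C bs)"
  define S where "S = {\<omega>\<in>PiE {1..T} (\<lambda>_. A). E \<omega>}"
  have set_\<Omega>: "set_pmf \<Omega> \<subseteq> PiE {1..T} (\<lambda>_. A)"
    using set_pmf_ew_pmf
    by (fastforce simp: \<Omega>_def set_Pi_pmf PiE_dflt_def PiE_def extensional_def)
  have "ew_event_prob A \<eta> C bs T E = (\<Sum>\<omega>\<in>S. pmf \<Omega> \<omega>)"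
    unfolding ew_event_prob_def S_def[symmetric]
    by (intro sum.cong refl)
       (auto simp: S_def \<Omega>_def pmf_Pi pmf_ew_pmf PiE_def extensional_def intro!: prod.cong)
  also have "\<dots> = measure_pmf.prob \<Omega> S"
    using finite by (intro measure_measure_pmf_finite[symmetric]) (auto simp: S_def finite_PiE)
  also have "\<dots> = measure_pmf.prob \<Omega> {\<omega>. E \<omega>}"
    using set_\<Omega> by (intro measure_eq_AE) (auto simp: AE_measure_pmf_iff S_def)
  finally show ?thesis
    by (simp add: \<Omega>_def)
qed

lemma sum_ew_weight_Suc:
  assumes "1 \<le> t"
  shows "(\<Sum>a\<in>A. ew_weight \<eta> C bs (Suc t) a)
           = (\<Sum>a\<in>A. ew_weight \<eta> C bs t a)
             * measure_pmf.expectation (ew_pmf A \<eta> C bs t) (\<lambda>a. exp (- \<eta> * C a (bs t)))"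
  using sum_ew_weight_pos[OF finite nonempty, of \<eta> C bs t] assms
  by (simp add: expectation_ew_pmf ew_weight_Suc ew_prob_def sum_distrib_left)

lemma ln_sum_ew_weight_Suc_le:
  assumes "1 \<le> t" "\<eta> > 0" and bounded: "\<And>a. a \<in> A \<Longrightarrow> C a (bs t) \<in> {0..R}"
  shows "ln (\<Sum>a\<in>A. ew_weight \<eta> C bs (Suc t) a)
           \<le> ln (\<Sum>a\<in>A. ew_weight \<eta> C bs t a)
              - \<eta> * measure_pmf.expectation (ew_pmf A \<eta> C bs t) (\<lambda>a. C a (bs t)) + \<eta>\<^sup>2 * R\<^sup>2 / 8"
proof -
  let ?p = "ew_pmf A \<eta> C bs t"
  let ?c = "measure_pmf.expectation ?p (\<lambda>a. C a (bs t))"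
  let ?W = "\<lambda>t. \<Sum>a\<in>A. ew_weight \<eta> C bs t a"
  have "AE a in measure_pmf ?p. - C a (bs t) \<in> {-R..0}"
    using bounded by (auto simp: AE_measure_pmf_iff dest: set_pmf_ew_pmf[THEN subsetD])
  then have "measure_pmf.expectation ?p (\<lambda>a. exp (\<eta> * - C a (bs t)))
      \<le> exp (\<eta> * measure_pmf.expectation ?p (\<lambda>a. - C a (bs t)) + \<eta>\<^sup>2 * (0 - - R)\<^sup>2 / 8)"
    by (intro measure_pmf.Hoeffdings_lemma_expectation) (simp_all add: \<open>\<eta> > 0\<close>)
  then have mgf: "measure_pmf.expectation ?p (\<lambda>a. exp (- \<eta> * C a (bs t)))
      \<le> exp (- \<eta> * ?c + \<eta>\<^sup>2 * R\<^sup>2 / 8)"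
    by simp
  have W_pos: "?W t > 0" "?W (Suc t) > 0"
    using sum_ew_weight_pos[OF finite nonempty] by auto
  have "ln (?W (Suc t)) \<le> ln (?W t * exp (- \<eta> * ?c + \<eta>\<^sup>2 * R\<^sup>2 / 8))"
  proof (rule ln_mono)
    show "?W (Suc t) \<le> ?W t * exp (- \<eta> * ?c + \<eta>\<^sup>2 * R\<^sup>2 / 8)"
      unfolding sum_ew_weight_Suc[OF \<open>1 \<le> t\<close>]
      by (rule mult_left_mono[OF mgf]) (use W_pos in simp)
  qed (fact W_pos)
  also have "\<dots> = ln (?W t) - \<eta> * ?c + \<eta>\<^sup>2 * R\<^sup>2 / 8"
    using W_pos by (simp add: ln_mult)
  finally show ?thesis .
qed

lemma ln_sum_ew_weight_le:
  assumes "\<eta> > 0" and bounded: "\<And>t a. t \<in> {1..T} \<Longrightarrow> a \<in> A \<Longrightarrow> C a (bs t) \<in> {0..R}"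
  shows "ln (\<Sum>a\<in>A. ew_weight \<eta> C bs (Suc T) a)
           \<le> ln (card A)
              + (\<Sum>t\<in>{1..T}. \<eta>\<^sup>2 * R\<^sup>2 / 8
                  - \<eta> * measure_pmf.expectation (ew_pmf A \<eta> C bs t) (\<lambda>a. C a (bs t)))"
  using bounded
proof (induction T)
  case 0
  then show ?case
    by (simp add: ew_weight_def)
next
  case (Suc T)
  have "ln (\<Sum>a\<in>A. ew_weight \<eta> C bs (Suc (Suc T)) a)
      \<le> ln (\<Sum>a\<in>A. ew_weight \<eta> C bs (Suc T) a)
         - \<eta> * measure_pmf.expectation (ew_pmf A \<eta> C bs (Suc T)) (\<lambda>a. C a (bs (Suc T)))
         + \<eta>\<^sup>2 * R\<^sup>2 / 8"
    by (rule ln_sum_ew_weight_Suc_le) (use Suc.prems \<open>\<eta> > 0\<close> in auto)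
  with Suc show ?case
    by simp
qed

lemma ew_expected_regret_le:
  assumes "\<eta> > 0" and bounded: "\<And>t a. t \<in> {1..T} \<Longrightarrow> a \<in> A \<Longrightarrow> C a (bs t) \<in> {0..R}"
  shows "(\<Sum>t\<in>{1..T}. measure_pmf.expectation (ew_pmf A \<eta> C bs t) (\<lambda>a. C a (bs t)))
           - Min ((\<lambda>a. \<Sum>t\<in>{1..T}. C a (bs t)) ` A)
         \<le> ln (card A) / \<eta> + \<eta> * T * R\<^sup>2 / 8"
proof -
  let ?L = "\<lambda>a. \<Sum>t\<in>{1..T}. C a (bs t)"
  let ?E = "\<Sum>t\<in>{1..T}. measure_pmf.expectation (ew_pmf A \<eta> C bs t) (\<lambda>a. C a (bs t))"
  have "Min (?L ` A) \<in> ?L ` A"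
    using finite nonempty by (intro Min_in) auto
  then obtain a\<^sub>0 where a\<^sub>0: "a\<^sub>0 \<in> A" "?L a\<^sub>0 = Min (?L ` A)"
    by auto
  have "- \<eta> * Min (?L ` A) = ln (ew_weight \<eta> C bs (Suc T) a\<^sub>0)"
    unfolding a\<^sub>0(2)[symmetric] by (simp add: ew_weight_def atLeastLessThanSuc_atLeastAtMost)
  also have "\<dots> \<le> ln (\<Sum>a\<in>A. ew_weight \<eta> C bs (Suc T) a)"
    using finite a\<^sub>0 ew_weight_pos
    by (intro ln_mono member_le_sum) (auto intro: less_imp_le)
  also have "\<dots> \<le> ln (card A) + T * (\<eta>\<^sup>2 * R\<^sup>2 / 8) - \<eta> * ?E"
    using ln_sum_ew_weight_le[of \<eta> T C bs R] assms
    by (simp add: sum_subtractf sum_distrib_left)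
  finally have "\<eta> * (?E - Min (?L ` A)) \<le> ln (card A) + T * (\<eta>\<^sup>2 * R\<^sup>2 / 8)"
    by (simp add: algebra_simps)
  also have "\<dots> = \<eta> * (ln (card A) / \<eta> + \<eta> * T * R\<^sup>2 / 8)"
    using \<open>\<eta> > 0\<close> by (simp add: field_simps power2_eq_square)
  finally show ?thesis
    using \<open>\<eta> > 0\<close> by simp
qed

lemma ew_expected_regret_tuned:
  assumes "T > 0" and bounded: "\<And>t a. t \<in> {1..T} \<Longrightarrow> a \<in> A \<Longrightarrow> C a (bs t) \<in> {0..R}"
  defines "\<eta> \<equiv> sqrt (ln (card A) / T)"
  shows "(\<Sum>t\<in>{1..T}. measure_pmf.expectation (ew_pmf A \<eta> C bs t) (\<lambda>a. C a (bs t)))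
           - Min ((\<lambda>a. \<Sum>t\<in>{1..T}. C a (bs t)) ` A)
         \<le> (R\<^sup>2 / 8 + 1) * sqrt (T * ln (card A))"
proof (cases "card A = 1")
  case True
  then obtain a\<^sub>0 where "A = {a\<^sub>0}"
    by (auto simp: card_1_singleton_iff)
  then have "measure_pmf.expectation (ew_pmf A \<eta> C bs t) (\<lambda>a. C a (bs t)) = C a\<^sub>0 (bs t)" for t
    unfolding expectation_ew_pmf by (simp add: ew_prob_def ew_weight_def)
  with \<open>A = {a\<^sub>0}\<close> show ?thesis
    by simp
next
  case False
  with finite nonempty have "card A \<ge> 2"
    by (metis One_nat_def card_0_eq less_2_cases_iff not_le)
  then have "ln (card A) > 0"
    by simp
  then have "\<eta> > 0"
    using \<open>T > 0\<close> by (simp add: \<eta>_def)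
  have ln_card: "ln (card A) = \<eta>\<^sup>2 * T"
    using \<open>ln (card A) > 0\<close> \<open>T > 0\<close> by (simp add: \<eta>_def)
  have "sqrt (T * ln (card A)) = \<eta> * T"
    unfolding ln_card using \<open>\<eta> > 0\<close> by (simp add: real_sqrt_mult power2_eq_square)
  moreover have "ln (card A) / \<eta> + \<eta> * T * R\<^sup>2 / 8 = (R\<^sup>2 / 8 + 1) * (\<eta> * T)"
    unfolding ln_card using \<open>\<eta> > 0\<close> by (simp add: power2_eq_square field_simps)
  ultimately show ?thesis
    using ew_expected_regret_le[of \<eta> T C bs R] \<open>\<eta> > 0\<close> bounded by simp
qed

end

lemma finite_res_set: "(\<And>n. n < N \<Longrightarrow> finite (Alev n)) \<Longrightarrow> finite (res_set N Alev)"
  unfolding res_set_def by (intro finite_PiE) auto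

lemma res_set_nonempty: "(\<And>n. n < N \<Longrightarrow> Alev n \<noteq> {}) \<Longrightarrow> res_set N Alev \<noteq> {}"
  unfolding res_set_def by (simp add: PiE_eq_empty_iff)

lemma cost_R_nonneg: "(\<And>n x. fR n x \<ge> 0) \<Longrightarrow> cost_R N fR a \<ge> 0"
  unfolding cost_R_def by (intro sum_nonneg) auto

lemma cost_V_nonneg: "(\<And>n x. fV n x \<ge> 0) \<Longrightarrow> cost_V N fV tr a b \<ge> 0"
  unfolding cost_V_def cost_V_of_def by (intro sum_nonneg) auto

lemma cost_T_nonneg: "(\<And>n m x. fT n m x \<ge> 0) \<Longrightarrow> cost_T N fT tr a b \<ge> 0"
  unfolding cost_T_def cost_T_of_def by (intro sum_nonneg) auto

lemma total_cost_bounded: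
  assumes "\<And>n x. fR n x \<ge> 0" "\<And>n x. fV n x \<ge> 0" "\<And>n m x. fT n m x \<ge> 0"
    and "\<bar>cost_R N fR a\<bar> \<le> \<Theta> \<and> \<bar>cost_T N fT tr a b\<bar> \<le> \<Theta> \<and> \<bar>cost_V N fV tr a b\<bar> \<le> \<Theta>"
  shows "cost_R N fR a + cost_V N fV tr a b + cost_T N fT tr a b \<in> {0..3 * \<Theta>}"
  using assms cost_R_nonneg[of fR N a] cost_V_nonneg[of fV N tr a b] cost_T_nonneg[of fT N tr a b]
  by auto

theorem theorem1:
  fixes N :: nat and Alev :: "nat \<Rightarrow> real set"
    and fR fV :: "nat \<Rightarrow> real \<Rightarrow> real" and fT :: "nat \<Rightarrow> nat \<Rightarrow> real \<Rightarrow> real"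
    and tr :: "vec \<Rightarrow> vec \<Rightarrow> transfer" and B :: "vec set"
    and \<Theta> :: real and T :: nat and bs :: "nat \<Rightarrow> vec" and \<delta> :: real
  assumes "N \<ge> 1"
    and "\<And>n. n < N \<Longrightarrow> finite (Alev n)" and "\<And>n. n < N \<Longrightarrow> Alev n \<noteq> {}"
    and "\<And>n x. fR n x > 0" and "\<And>n x. fV n x > 0" and "\<And>n m x. fT n m x > 0"
    and "optimal_transfer N fV fT (res_set N Alev) B tr"
    and "\<Theta> > 0"
    and "\<And>a b. a \<in> res_set N Alev \<Longrightarrow> b \<in> B \<Longrightarrow>
           \<bar>cost_R N fR a\<bar> \<le> \<Theta> \<and> \<bar>cost_T N fT tr a b\<bar> \<le> \<Theta> \<and> \<bar>cost_V N fV tr a b\<bar> \<le> \<Theta>"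
    and "T > 0"
    and "\<And>t. t \<in> {1..T} \<Longrightarrow> bs t \<in> B"
    and "0 < \<delta>" and "\<delta> < 1"
  shows "let AA = res_set N Alev;
             C = (\<lambda>a b. cost_R N fR a + cost_V N fV tr a b + cost_T N fT tr a b);
             \<eta> = sqrt (ln (real (card AA)) / real T)
         in ew_event_prob AA \<eta> C bs T
              (\<lambda>\<omega>. regret AA C bs T \<omega> \<le>
                 (9 * \<Theta>\<^sup>2 / 8 + 1) * sqrt (real T * ln (real (card AA)))
                 + 3 * \<Theta> * sqrt (1/2 * ln (1 / \<delta>) * real T))
            \<ge> 1 - \<delta>"
proof -
  define AA where "AA = res_set N Alev"
  define C where "C = (\<lambda>a b. cost_R N fR a + cost_V N fV tr a b + cost_T N fT tr a b)"
  let ?\<eta> = "sqrt (ln (real (card AA)) / real T)"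
  let ?\<Omega> = "Pi_pmf {1..T} undefined (ew_pmf AA ?\<eta> C bs)"
  let ?E = "\<lambda>t. measure_pmf.expectation (ew_pmf AA ?\<eta> C bs t) (\<lambda>a. C a (bs t))"
  let ?regret_bound = "(9 * \<Theta>\<^sup>2 / 8 + 1) * sqrt (real T * ln (real (card AA)))"
  let ?deviation = "3 * \<Theta> * sqrt (1/2 * ln (1 / \<delta>) * real T)"
  have finite: "finite AA" and nonempty: "AA \<noteq> {}"
    using assms(2,3) by (simp_all add: AA_def finite_res_set res_set_nonempty)
  have bounded: "C a (bs t) \<in> {0..3 * \<Theta>}" if "t \<in> {1..T}" "a \<in> AA" for t a
    unfolding C_def using assms(4-6) assms(9)[OF _ assms(11)] that
    by (intro total_cost_bounded) (auto simp: AA_def less_imp_le)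
  have expected_regret:
    "(\<Sum>t\<in>{1..T}. ?E t) - Min ((\<lambda>a. \<Sum>t\<in>{1..T}. C a (bs t)) ` AA) \<le> ?regret_bound"
    using ew_expected_regret_tuned[OF finite nonempty \<open>T > 0\<close>, where C = C and bs = bs and R = "3 * \<Theta>"]
      bounded
    by (simp add: power_mult_distrib)
  have "1 - \<delta> \<le> measure_pmf.prob ?\<Omega> {\<omega>. (\<Sum>t\<in>{1..T}. C (\<omega> t) (bs t))
      \<le> (\<Sum>t\<in>{1..T}. ?E t) + (3 * \<Theta> - 0) * sqrt (1/2 * ln (1 / \<delta>) * card {1..T})}"
    using bounded \<open>\<Theta> > 0\<close> \<open>T > 0\<close> \<open>0 < \<delta>\<close> \<open>\<delta> < 1\<close>
    by (intro Pi_pmf_Hoeffding_confidence) (auto dest: set_pmf_ew_pmf[OF finite nonempty, THEN subsetD])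
  also have "\<dots> \<le> measure_pmf.prob ?\<Omega> {\<omega>. regret AA C bs T \<omega> \<le> ?regret_bound + ?deviation}"
    using expected_regret by (intro measure_pmf.finite_measure_mono) (auto simp: regret_def)
  also have "\<dots> = ew_event_prob AA ?\<eta> C bs T (\<lambda>\<omega>. regret AA C bs T \<omega> \<le> ?regret_bound + ?deviation)"
    by (rule ew_event_prob_eq_Pi_pmf[OF finite nonempty, symmetric])
  finally show ?thesis
    unfolding Let_def AA_def C_def .
qed

end
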